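(* Let $(u_n)_{n \geq 1}$ be a virtual isometry. For each $n$, write the eigenvalues of $u_n$ as $e^{i\theta^{(n)}_1},\dots,e^{i\theta^{(n)}_n}$ with $0\le\theta^{(n)}_1\le\dots\le\theta^{(n)}_n<2\pi$, let $(f^{(n)}_k)_{1\le k\le n}$ be an orthonormal basis of $\mathbb{C}^n$ with $u_n f^{(n)}_k = e^{i\theta^{(n)}_k} f^{(n)}_k$, and write $x_{n+1} := u_{n+1}(e_{n+1}) = \sum_{k=1}^n \mu^{(n)}_k f^{(n)}_k + \nu_n e_{n+1}$. Assume $u_1 \neq 1$, $\nu_n \neq 0$ for all $n \ge 1$, and $\mu^{(n)}_k \neq 0$ for all $n\ge1$, $k\in\{1,\dots,n\}$. Then for all $n\ge1$ and $k \in\{1,\dots,n\}$, the quantities $\rho_n := |\nu_n| \in (0,1)$, $\psi_n := \mathrm{Arg}(\nu_n) \in (-\pi,\pi]$ and $\gamma^{(n)}_k := |\mu^{(n)}_k|^2/(1 - |\nu_n|^2)$ are well-defined, and $\sum_{k=1}^n \gamma^{(n)}_k = 1$. Moreover, for all $n \geq 1$, the function $$\Phi(\eta) := (1+\rho_n^2)\cos(\eta/2) - 2\rho_n\cos(\eta/2 - \psi_n) + (1-\rho_n^2)\sin(\eta/2)\sum_{k=1}^n \gamma^{(n)}_k \cot\left(\frac{\eta - \theta^{(n)}_k}{2}\right),$$ defined for $\eta \in [0,2\pi]\setminus\{\theta^{(n)}_k : 1\le k\le n\}$, vanishes if and only if $\eta = \theta^{(n+1)}_k$ for some $k\in\{1,\dots,n+1\}$,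 and $$0 < \theta^{(n+1)}_1 < \theta^{(n)}_1 < \theta^{(n+1)}_2 < \theta^{(n)}_2 < \dots < \theta^{(n+1)}_n < \theta^{(n)}_n < \theta^{(n+1)}_{n+1} < 2\pi.$$
   Context: Let $(e_k)$ be the canonical basis of $\ell^2$; identify $\mathbb{C}^n$ with the span of $e_1,\dots,e_n$ and $U(n)$ with the unitary operators fixing every $e_k$, $k>n$. For $n\ge m\ge1$ and $u\in U(n)$, $\pi_{n,m}(u)$ is the unique $v\in U(m)$ such that the range of $u-v$ is contained in $(u-\mathrm{Id})(\mathrm{span}\{e_k:k>m\})$ (existence and uniqueness are known). A virtual isometry is a sequence $(u_n)_{n\ge1}$ with $u_n\in U(n)$ and $\pi_{n+1,n}(u_{n+1})=u_n$ for all $n\ge1$. *)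

theory Defs
  imports Complex_Main
begin

text \<open>Vectors of l2 are functions
  nat => complex, indexed from 1 (index 0 is unused).  Every operator in U(n)
  fixes e_k for k > n, so it is determined by an n x n block; we represent it
  by a matrix nat => nat => complex which equals the identity outside the
  block {1..n} x {1..n}.\<close>

definition evec :: "nat \<Rightarrow> nat \<Rightarrow> complex" where
  "evec k = (\<lambda>i. if i = k then 1 else 0)"

definition idm :: "nat \<Rightarrow> nat \<Rightarrow> complex" where
  "idm = (\<lambda>i j. if i = j then 1 else 0)"

definition Cn :: "nat \<Rightarrow> (nat \<Rightarrow> complex) set" where
  "Cn n = {x. \<forall>i. i \<notin> {1..n} \<longrightarrow> x i = 0}"

definition cinner :: "nat \<Rightarrow> (nat \<Rightarrow> complex) \<Rightarrow> (nat \<Rightarrow> complex) \<Rightarrow> complex" where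
  "cinner n x y = (\<Sum>i=1..n. x i * cnj (y i))"

definition mv :: "nat \<Rightarrow> (nat \<Rightarrow> nat \<Rightarrow> complex) \<Rightarrow> (nat \<Rightarrow> complex) \<Rightarrow> (nat \<Rightarrow> complex)" where
  "mv n A x = (\<lambda>i. if i \<in> {1..n} then (\<Sum>j=1..n. A i j * x j) else 0)"

definition Umat :: "nat \<Rightarrow> (nat \<Rightarrow> nat \<Rightarrow> complex) set" where
  "Umat n = {A. (\<forall>i j. (i \<notin> {1..n} \<or> j \<notin> {1..n}) \<longrightarrow> A i j = idm i j)
             \<and> (\<forall>i\<in>{1..n}. \<forall>j\<in>{1..n}. (\<Sum>k=1..n. cnj (A k i) * A k j) = idm i j)
             \<and> (\<forall>i\<in>{1..n}. \<forall>j\<in>{1..n}. (\<Sum>k=1..n. A i k * cnj (A j k)) = idm i j)}"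

text \<open>pi_{n,m}(u): the unique v in U(m) with range(u - v) contained in
  (u - Id)(span{e_k : k > m}).  Since u and v both act as the identity on
  e_k for k > n, both sides only involve C^n, and
  (u - Id)(span{e_k : k > m}) = (u - Id)(span{e_k : m < k <= n}).\<close>
definition pi_proj :: "nat \<Rightarrow> nat \<Rightarrow> (nat \<Rightarrow> nat \<Rightarrow> complex) \<Rightarrow> (nat \<Rightarrow> nat \<Rightarrow> complex)" where
  "pi_proj n m u = (THE v. v \<in> Umat m \<and>
      (\<forall>x\<in>Cn n. \<exists>y\<in>Cn n. (\<forall>i\<in>{1..m}. y i = 0) \<and>
          (\<lambda>i. mv n u x i - mv n v x i) = (\<lambda>i. mv n u y i - y i)))"

definition virtual_isometry :: "(nat \<Rightarrow> nat \<Rightarrow> nat \<Rightarrow> complex) \<Rightarrow> bool" where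
  "virtual_isometry u \<longleftrightarrow> (\<forall>n\<ge>1. u n \<in> Umat n \<and> pi_proj (n+1) n (u (n+1)) = u n)"

definition orthonormal_basis :: "nat \<Rightarrow> (nat \<Rightarrow> nat \<Rightarrow> complex) \<Rightarrow> bool" where
  "orthonormal_basis n b \<longleftrightarrow> (\<forall>k\<in>{1..n}. b k \<in> Cn n)
     \<and> (\<forall>k\<in>{1..n}. \<forall>l\<in>{1..n}. cinner n (b k) (b l) = idm k l)
     \<and> (\<forall>x\<in>Cn n. \<exists>c. x = (\<lambda>i. \<Sum>k=1..n. c k * b k i))"

end

theory Submission
  imports Defs
begin

text \<open>Write \<open>U = u\<^sub>n\<^sub>+\<^sub>1\<close>. Its projection \<open>V = u\<^sub>n\<close> differs from \<open>U\<close> by a rank-one map with range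
  spanned by \<open>(U - Id) e\<^sub>n\<^sub>+\<^sub>1\<close>. Expanding an eigenvector of \<open>U\<close> with eigenvalue \<open>\<lambda> = e\<^sup>i\<^sup>\<eta>\<close> in the
  eigenbasis \<open>f\<close> of \<open>V\<close> and \<open>e\<^sub>n\<^sub>+\<^sub>1\<close> yields, since all \<open>\<mu>\<^sub>k \<noteq> 0\<close> and \<open>\<nu> \<noteq> 1\<close>, that \<open>\<lambda>\<close> is
  neither \<open>1\<close> nor any \<open>e\<^sup>i\<^sup>\<theta>\<^sup>k\<close>, and the secular equation
  \<open>\<lambda> \<Sum>\<^sub>k |\<mu>\<^sub>k|\<^sup>2 / (\<lambda> - e\<^sup>i\<^sup>\<theta>\<^sup>k) = (\<nu> - 1)(1 - \<lambda> \<nu>\<^sup>*) / (\<lambda> - 1)\<close>, which is \<open>\<Phi>(\<eta>) = 0\<close> in disguise.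
  On \<open>(0, 2\<pi>)\<close> one has \<open>\<Phi>(\<eta>) = sin(\<eta>/2) g(\<eta>)\<close> with \<open>g\<close> strictly decreasing between consecutive
  \<open>\<theta>\<^sub>k\<close>, so each of the \<open>n + 1\<close> gaps cut out by \<open>0 < \<theta>\<^sub>1 < \<dots> < \<theta>\<^sub>n < 2\<pi>\<close> contains at most one zero
  of \<open>\<Phi>\<close>. The \<open>n + 1\<close> eigenangles of \<open>U\<close> are distinct zeros of \<open>\<Phi>\<close>, hence occupy one gap each,
  which is the interlacing. Induction on \<open>n\<close>, starting from \<open>u\<^sub>1 \<noteq> 1\<close>, provides the strict
  ordering of the \<open>\<theta>\<^sup>(\<^sup>n\<^sup>)\<close> that each step needs.\<close>

section \<open>Inner products and unitary matrices\<close>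

lemma cinner_cong: "(\<And>i. i \<in> {1..n} \<Longrightarrow> p i = p' i) \<Longrightarrow> cinner n p q = cinner n p' q"
  unfolding cinner_def by (rule sum.cong) auto

lemma cinner_scale: "cinner n (\<lambda>i. a * p i) r = a * cinner n p r"
  unfolding cinner_def by (simp add: sum_distrib_left algebra_simps)

lemma cinner_add: "cinner n (\<lambda>i. p i + q i) r = cinner n p r + cinner n q r"
  unfolding cinner_def by (simp add: sum.distrib algebra_simps)

lemma cinner_lin: "cinner n (\<lambda>i. a * p i + b * q i) r = a * cinner n p r + b * cinner n q r"
  unfolding cinner_def by (simp add: sum.distrib sum_distrib_left algebra_simps)

lemma cinner_Suc: "cinner (Suc n) p q = cinner n p q + p (Suc n) * cnj (q (Suc n))"
  unfolding cinner_def by simp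

lemma cinner_evec: "j \<in> {1..n} \<Longrightarrow> cinner n p (evec j) = p j"
  unfolding cinner_def evec_def by (simp add: if_distrib cong: if_cong)

lemma cinner_self_eq_0:
  assumes "cinner n p p = 0" "i \<in> {1..n}" shows "p i = 0"
proof -
  have "cinner n p p = of_real (\<Sum>i=1..n. (cmod (p i))^2)"
    unfolding cinner_def by (simp add: complex_norm_square[symmetric])
  hence "(\<Sum>i=1..n. (cmod (p i))^2) = 0" using assms(1) by (metis of_real_eq_0_iff)
  hence "(cmod (p i))^2 = 0" using assms(2) by (subst (asm) sum_nonneg_eq_0_iff) auto
  thus ?thesis by simp
qed

lemma cinner_onb_coeff:
  assumes F: "orthonormal_basis n F" and k: "k \<in> {1..n}"
  shows "cinner n (\<lambda>i. \<Sum>l=1..n. c l * F l i) (F k) = c k"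
proof -
  have "cinner n (\<lambda>i. \<Sum>l=1..n. c l * F l i) (F k) = (\<Sum>i=1..n. \<Sum>l=1..n. c l * (F l i * cnj (F k i)))"
    unfolding cinner_def by (simp add: sum_distrib_right mult.assoc)
  also have "\<dots> = (\<Sum>l=1..n. c l * cinner n (F l) (F k))"
    by (subst sum.swap) (simp add: sum_distrib_left cinner_def)
  also have "\<dots> = (\<Sum>l=1..n. c l * idm l k)"
    using F k unfolding orthonormal_basis_def by (intro sum.cong) auto
  also have "\<dots> = c k" using k by (simp add: idm_def if_distrib cong: if_cong)
  finally show ?thesis .
qed

lemma onb_expansion:
  assumes F: "orthonormal_basis n F" and i: "i \<in> {1..n}"
  shows "p i = (\<Sum>k=1..n. cinner n p (F k) * F k i)"
proof -
  define p' where "p' = (\<lambda>i. if i \<in> {1..n} then p i else 0)"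
  have "p' \<in> Cn n" by (auto simp: p'_def Cn_def)
  then obtain c where c: "p' = (\<lambda>i. \<Sum>k=1..n. c k * F k i)"
    using F unfolding orthonormal_basis_def by blast
  have "cinner n p (F k) = c k" if "k \<in> {1..n}" for k
  proof -
    have "cinner n p (F k) = cinner n p' (F k)" by (rule cinner_cong) (simp add: p'_def)
    thus ?thesis using cinner_onb_coeff[OF F that] by (simp add: c)
  qed
  moreover have "p i = (\<Sum>k=1..n. c k * F k i)" using i fun_cong[OF c, of i] by (simp add: p'_def)
  ultimately show ?thesis by simp
qed

lemma parseval:
  assumes F: "orthonormal_basis n F"
  shows "cinner n p q = (\<Sum>k=1..n. cinner n p (F k) * cnj (cinner n q (F k)))"
proof -
  have "cinner n p q = (\<Sum>i=1..n. (\<Sum>k=1..n. cinner n p (F k) * F k i) * cnj (q i))"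
    using onb_expansion[OF F, of _ p] by (simp add: cinner_def[of n p q])
  also have "\<dots> = (\<Sum>i=1..n. \<Sum>k=1..n. cinner n p (F k) * (F k i * cnj (q i)))"
    by (simp add: sum_distrib_right mult.assoc)
  also have "\<dots> = (\<Sum>k=1..n. cinner n p (F k) * (\<Sum>i=1..n. F k i * cnj (q i)))"
    by (subst sum.swap) (simp add: sum_distrib_left)
  finally show ?thesis unfolding cinner_def by (simp add: mult.commute)
qed

lemma parseval_self:
  assumes "orthonormal_basis n F"
  shows "cinner n p p = of_real (\<Sum>k=1..n. (cmod (cinner n p (F k)))^2)"
  by (subst parseval[OF assms]) (simp add: complex_norm_square[symmetric])

lemma mv_scale: "mv n A (\<lambda>i. a * p i) = (\<lambda>i. a * mv n A p i)"
  unfolding mv_def by (auto simp: sum_distrib_left algebra_simps)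

lemma mv_lin: "mv n A (\<lambda>i. a * p i + b * q i) = (\<lambda>i. a * mv n A p i + b * mv n A q i)"
  unfolding mv_def by (auto simp: sum.distrib sum_distrib_left algebra_simps)

lemma mv_sum: "mv n A (\<lambda>i. \<Sum>k\<in>K. c k * F k i) = (\<lambda>i. \<Sum>k\<in>K. c k * mv n A (F k) i)"
proof -
  have "(\<Sum>j=1..n. A i j * (\<Sum>k\<in>K. c k * F k j)) = (\<Sum>k\<in>K. c k * (\<Sum>j=1..n. A i j * F k j))" for i
  proof -
    have "(\<Sum>j=1..n. A i j * (\<Sum>k\<in>K. c k * F k j)) = (\<Sum>j=1..n. \<Sum>k\<in>K. c k * (A i j * F k j))"
      by (simp add: sum_distrib_left mult.left_commute)
    also have "\<dots> = (\<Sum>k\<in>K. c k * (\<Sum>j=1..n. A i j * F k j))"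
      by (subst sum.swap) (simp add: sum_distrib_left)
    finally show ?thesis .
  qed
  thus ?thesis unfolding mv_def by (auto intro!: ext)
qed

lemma mv_evec: "j \<in> {1..n} \<Longrightarrow> mv n A (evec j) i = (if i \<in> {1..n} then A i j else 0)"
  unfolding mv_def evec_def by (simp add: if_distrib cong: if_cong)

lemma Umat_outside: "A \<in> Umat n \<Longrightarrow> i \<notin> {1..n} \<or> j \<notin> {1..n} \<Longrightarrow> A i j = idm i j"
  unfolding Umat_def by blast

lemma Umat_cinner:
  assumes "A \<in> Umat n"
  shows "cinner n (mv n A p) (mv n A q) = cinner n p q"
proof -
  have col: "(\<Sum>k=1..n. cnj (A k l) * A k j) = idm l j" if "l \<in> {1..n}" "j \<in> {1..n}" for l j
    using assms that unfolding Umat_def by blast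
  have "cinner n (mv n A p) (mv n A q)
      = (\<Sum>i=1..n. \<Sum>l=1..n. \<Sum>j=1..n. p j * cnj (q l) * (cnj (A i l) * A i j))"
    unfolding cinner_def mv_def by (simp add: sum_distrib_left sum_distrib_right mult_ac)
  also have "\<dots> = (\<Sum>l=1..n. \<Sum>j=1..n. \<Sum>i=1..n. p j * cnj (q l) * (cnj (A i l) * A i j))"
    by (subst sum.swap) (rule sum.cong[OF refl], rule sum.swap)
  also have "\<dots> = (\<Sum>l=1..n. \<Sum>j=1..n. p j * cnj (q l) * (\<Sum>i=1..n. cnj (A i l) * A i j))"
    by (simp add: sum_distrib_left)
  also have "\<dots> = (\<Sum>l=1..n. \<Sum>j=1..n. p j * cnj (q l) * idm l j)"
    by (intro sum.cong refl) (auto simp: col[simplified])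
  also have "\<dots> = cinner n p q"
    unfolding cinner_def by (intro sum.cong refl) (simp add: idm_def if_distrib cong: if_cong)
  finally show ?thesis .
qed

section \<open>Trigonometric identities\<close>

lemma cis_inj_on_0_2pi:
  assumes "0 \<le> a" "a < 2*pi" "0 \<le> b" "b < 2*pi" and "cis a = cis b"
  shows "a = b"
proof -
  have "cis (a - b) = 1" using assms(5) by (simp add: cis_divide[symmetric])
  hence "cos (a - b) = 1" by (metis cis.sel(1) one_complex.sel(1))
  then obtain k :: int where k: "a - b = k * 2 * pi" by (auto simp: cos_one_2pi_int)
  have "- 2*pi < k * 2 * pi" "k * 2 * pi < 2 * pi" using assms(1-4) k by linarith+
  hence "(-1) * (2*pi) < real_of_int k * (2*pi)" "real_of_int k * (2*pi) < 1 * (2*pi)"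
    by (simp_all add: mult.assoc)
  hence "-1 < real_of_int k" "real_of_int k < 1"
    by (metis mult_less_cancel_right_pos pi_gt_zero zero_less_mult_iff zero_less_numeral)+
  hence "k = 0" by linarith
  thus ?thesis using k by simp
qed

lemma cos_cis: "complex_of_real (cos x) = (cis x + 1 / cis x) / 2"
proof -
  have "1 / cis x = cis (-x)" by (simp add: divide_inverse)
  thus ?thesis by (simp add: complex_eq_iff)
qed

lemma sin_cis: "complex_of_real (sin x) = (cis x - 1 / cis x) / (2 * \<i>)"
proof -
  have "1 / cis x = cis (-x)" by (simp add: divide_inverse)
  thus ?thesis by (simp add: complex_eq_iff)
qed

lemma cis_half_sq: "cis (x / 2) ^ 2 = cis x"
proof -
  have "cis (x / 2) ^ 2 = cis (x / 2 + x / 2)" unfolding power2_eq_square by (rule cis_mult)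
  thus ?thesis by simp
qed

lemma sin_half_diff_eq_0_imp_cis_eq:
  assumes "sin ((a - b) / 2) = 0" shows "cis a = cis b"
proof -
  define c where "c = (a - b) / 2"
  have s0: "sin c = 0" using assms by (simp add: c_def)
  have "cos c ^ 2 = 1" using s0 sin_cos_squared_add[of c] by simp
  hence "cos (2 * c) = 1" "sin (2 * c) = 0" using s0 by (simp_all add: cos_double sin_double)
  hence "cis (2 * c) = 1" by (simp add: complex_eq_iff)
  moreover have "cis a = cis b * cis (2 * c)"
  proof -
    have "b + 2 * c = a" by (simp add: c_def field_simps)
    thus ?thesis by (simp add: cis_mult)
  qed
  ultimately show ?thesis by simp
qed

lemma cis_div_cis_diff:
  fixes \<eta> \<theta> :: real
  assumes s: "sin ((\<eta> - \<theta>) / 2) \<noteq> 0"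
  shows "cis \<eta> / (cis \<eta> - cis \<theta>) = 1/2 - \<i>/2 * complex_of_real (cot ((\<eta> - \<theta>) / 2))"
proof -
  define z where "z = cis ((\<eta> - \<theta>) / 2)"
  define e where "e = cis \<theta>"
  have z0: "z \<noteq> 0" and e0: "e \<noteq> 0" by (auto simp: z_def e_def)
  have eta: "cis \<eta> = e * z^2" by (simp add: e_def z_def cis_half_sq cis_mult)
  have c: "complex_of_real (cos ((\<eta> - \<theta>) / 2)) = (z + 1/z) / 2" by (simp add: z_def cos_cis)
  have sn: "complex_of_real (sin ((\<eta> - \<theta>) / 2)) = (z - 1/z) / (2*\<i>)" by (simp add: z_def sin_cis)
  have zz: "z^2 - 1 \<noteq> 0"
  proof
    assume "z^2 - 1 = 0"
    hence "z - 1/z = 0" using z0 by (simp add: field_simps power2_eq_square)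
    thus False using s sn by simp
  qed
  have cot: "complex_of_real (cot ((\<eta> - \<theta>) / 2)) = \<i> * (z^2 + 1) / (z^2 - 1)"
  proof -
    have "complex_of_real (cot ((\<eta> - \<theta>) / 2))
        = complex_of_real (cos ((\<eta> - \<theta>) / 2)) / complex_of_real (sin ((\<eta> - \<theta>) / 2))"
      by (simp add: cot_def)
    also have "\<dots> = \<i> * (z^2 + 1) / (z^2 - 1)"
      unfolding c sn using z0 zz by (simp add: field_simps power2_eq_square)
    finally show ?thesis .
  qed
  show ?thesis unfolding eta cot e_def[symmetric] using e0 zz by (simp add: field_simps power2_eq_square)
qed

text \<open>Substituting \<open>cos h = (w + w\<inverse>)/2\<close>, \<open>sin h = (w - w\<inverse>)/(2\<i>)\<close> with \<open>w = cis h\<close> turns the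
  real trigonometric expression into a rational function of \<open>w\<close>.\<close>

lemma trig_secular_zero:
  fixes \<rho> \<psi> h S :: real
  assumes "(1 - (of_real \<rho>)^2) / 2 * (1 - \<i> * of_real S) * ((cis h)^2 - 1)
      = (of_real \<rho> * cis \<psi> - 1) * (1 - (cis h)^2 * of_real \<rho> / cis \<psi>)"
  shows "(1 + \<rho>\<^sup>2) * cos h - 2 * \<rho> * cos (h - \<psi>) + (1 - \<rho>\<^sup>2) * sin h * S = 0"
proof -
  define w where "w = cis h"
  define p where "p = cis \<psi>"
  have w0: "w \<noteq> 0" and p0: "p \<noteq> 0" by (auto simp: w_def p_def)
  have c1: "complex_of_real (cos h) = (w + 1/w) / 2" by (simp add: w_def cos_cis)
  have s1: "complex_of_real (sin h) = (w - 1/w) / (2*\<i>)" by (simp add: w_def sin_cis)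
  have c2: "complex_of_real (cos (h - \<psi>)) = (w/p + p/w) / 2"
    using cos_cis[of "h - \<psi>"] by (simp add: w_def p_def cis_divide[symmetric])
  have field: "(1 + r^2) * ((w + 1/w)/2) - 2*r*((w/p + p/w)/2) + (1 - r^2) * ((w - 1/w)/(2*\<i>)) * s
      = ((1 - r^2)/2 * (1 - \<i> * s) * (w^2 - 1) - (r * p - 1) * (1 - w^2 * r / p)) / w" for r s
  proof -
    have "(1 - r^2) * ((w - 1/w)/(2*\<i>)) * s = (1 - r^2) * (- \<i> * s) * (w - 1/w) / 2"
      by (simp add: field_simps)
    thus ?thesis using w0 p0 by (simp add: field_simps) (simp add: algebra_simps power2_eq_square)
  qed
  have "complex_of_real ((1 + \<rho>\<^sup>2) * cos h - 2 * \<rho> * cos (h - \<psi>) + (1 - \<rho>\<^sup>2) * sin h * S)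
      = (1 + (of_real \<rho>)^2) * complex_of_real (cos h) - 2 * of_real \<rho> * complex_of_real (cos (h - \<psi>))
        + (1 - (of_real \<rho>)^2) * complex_of_real (sin h) * of_real S"
    by simp
  also have "\<dots> = ((1 - (of_real \<rho>)^2) / 2 * (1 - \<i> * of_real S) * (w^2 - 1)
      - (of_real \<rho> * p - 1) * (1 - w^2 * of_real \<rho> / p)) / w"
    unfolding c1 s1 c2 by (rule field)
  also have "\<dots> = 0" unfolding w_def p_def assms by simp
  finally show ?thesis by (simp only: of_real_eq_0_iff)
qed

lemma cot_less_cot:
  fixes a b :: real
  assumes "a < b" "b - a < pi" and s: "sin a * sin b > 0"
  shows "cot b < cot a"
proof -
  have "sin a \<noteq> 0" "sin b \<noteq> 0" using s by auto
  hence "cot a - cot b = (cos a * sin b - sin a * cos b) / (sin a * sin b)"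
    by (simp add: cot_def field_simps)
  also have "cos a * sin b - sin a * cos b = sin (b - a)" by (simp add: sin_diff)
  finally have e: "cot a - cot b = sin (b - a) / (sin a * sin b)" .
  have "sin (b - a) > 0" using assms by (intro sin_gt_zero) auto
  hence "cot a - cot b > 0" unfolding e using s by simp
  thus ?thesis by simp
qed

section \<open>The projection \<open>\<pi>\<^sub>n\<^sub>+\<^sub>1\<^sub>,\<^sub>n\<close>\<close>

text \<open>The explicit form of \<open>\<pi>\<^sub>n\<^sub>+\<^sub>1\<^sub>,\<^sub>n(U)\<close>: it maps \<open>x\<close> to \<open>U x - (U - Id)(c e\<^sub>n\<^sub>+\<^sub>1)\<close>,
  with \<open>c\<close> chosen so that the image has the same last coordinate as \<open>x\<close>.\<close>

definition pi_last :: "nat \<Rightarrow> (nat \<Rightarrow> nat \<Rightarrow> complex) \<Rightarrow> nat \<Rightarrow> nat \<Rightarrow> complex" where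
  "pi_last n U = (\<lambda>i j. if i \<in> {1..n} \<and> j \<in> {1..n}
      then U i j - U i (Suc n) * U (Suc n) j / (U (Suc n) (Suc n) - 1) else idm i j)"

lemma orthonormal_cols_eliminate_last:
  fixes A :: "nat \<Rightarrow> nat \<Rightarrow> complex" and n :: nat
  defines "d \<equiv> A (Suc n) (Suc n) - 1"
  assumes cols: "\<And>a b. a \<in> {1..Suc n} \<Longrightarrow> b \<in> {1..Suc n} \<Longrightarrow>
      (\<Sum>k=1..Suc n. cnj (A k a) * A k b) = idm a b"
    and d: "d \<noteq> 0" and i: "i \<in> {1..n}" and j: "j \<in> {1..n}"
  shows "(\<Sum>k=1..n. cnj (A k i - A k (Suc n) * A (Suc n) i / d)
                    * (A k j - A k (Suc n) * A (Suc n) j / d)) = idm i j"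
proof -
  define m where "m = Suc n"
  have cd: "cnj d \<noteq> 0" using d by simp
  have im: "i \<in> {1..m}" "j \<in> {1..m}" "m \<in> {1..m}" using i j by (auto simp: m_def)
  have col: "(\<Sum>k=1..n. cnj (A k a) * A k b) = idm a b - cnj (A m a) * A m b"
    if "a \<in> {1..m}" "b \<in> {1..m}" for a b
    using cols[of a b] that by (simp add: m_def eq_diff_eq)
  have "(\<Sum>k=1..n. cnj (A k i - A k m * A m i / d) * (A k j - A k m * A m j / d))
      = (\<Sum>k=1..n. cnj (A k i) * A k j - (A m j / d) * (cnj (A k i) * A k m)
          - (cnj (A m i) / cnj d) * (cnj (A k m) * A k j)
          + (cnj (A m i) * A m j / (d * cnj d)) * (cnj (A k m) * A k m))"
    using d cd by (intro sum.cong refl) (simp add: field_simps)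
  also have "\<dots> = (\<Sum>k=1..n. cnj (A k i) * A k j) - (A m j / d) * (\<Sum>k=1..n. cnj (A k i) * A k m)
      - (cnj (A m i) / cnj d) * (\<Sum>k=1..n. cnj (A k m) * A k j)
      + (cnj (A m i) * A m j / (d * cnj d)) * (\<Sum>k=1..n. cnj (A k m) * A k m)"
    by (simp only: sum.distrib sum_subtractf sum_distrib_left)
  also have "\<dots> = idm i j - cnj (A m i) * A m j * (1 - (d + 1) / d - (cnj d + 1) / cnj d
      - (1 - (cnj d + 1) * (d + 1)) / (d * cnj d))"
    using i j unfolding col[OF im(1,2)] col[OF im(1,3)] col[OF im(3,2)] col[OF im(3,3)]
    by (simp add: idm_def d_def m_def algebra_simps)
  also have "1 - (d + 1) / d - (cnj d + 1) / cnj d - (1 - (cnj d + 1) * (d + 1)) / (d * cnj d) = 0"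
    using d cd by (simp add: field_simps)
  finally show ?thesis by (simp add: m_def)
qed

lemma pi_last_Umat:
  assumes U: "U \<in> Umat (Suc n)" and d: "U (Suc n) (Suc n) \<noteq> 1"
  shows "pi_last n U \<in> Umat n"
proof -
  let ?m = "Suc n"
  have cols: "(\<Sum>k=1..n. cnj (pi_last n U k i) * pi_last n U k j) = idm i j"
    if "i \<in> {1..n}" "j \<in> {1..n}" for i j
  proof -
    have "(\<Sum>k=1..n. cnj (pi_last n U k i) * pi_last n U k j)
        = (\<Sum>k=1..n. cnj (U k i - U k ?m * U ?m i / (U ?m ?m - 1))
                   * (U k j - U k ?m * U ?m j / (U ?m ?m - 1)))"
      using that by (intro sum.cong refl) (simp add: pi_last_def)
    also have "\<dots> = idm i j"
      using U d that by (intro orthonormal_cols_eliminate_last) (auto simp: Umat_def)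
    finally show ?thesis .
  qed
  have rows: "(\<Sum>k=1..n. pi_last n U i k * cnj (pi_last n U j k)) = idm i j"
    if "i \<in> {1..n}" "j \<in> {1..n}" for i j
  proof -
    define A where "A = (\<lambda>k a. cnj (U a k))"
    have "(\<Sum>k=1..n. pi_last n U i k * cnj (pi_last n U j k))
        = (\<Sum>k=1..n. cnj (A k i - A k ?m * A ?m i / (A ?m ?m - 1))
                   * (A k j - A k ?m * A ?m j / (A ?m ?m - 1)))"
      using that by (intro sum.cong refl) (simp add: pi_last_def A_def mult.commute)
    also have "\<dots> = idm i j"
      using U d that by (intro orthonormal_cols_eliminate_last)
        (auto simp: Umat_def A_def idm_def mult.commute)
    finally show ?thesis .
  qed
  show ?thesis using cols rows unfolding Umat_def by (auto simp: pi_last_def)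
qed

lemma pi_last_rank_one:
  fixes U :: "nat \<Rightarrow> nat \<Rightarrow> complex" and x :: "nat \<Rightarrow> complex"
  assumes d: "U (Suc n) (Suc n) \<noteq> 1"
  defines "c \<equiv> (\<Sum>j=1..n. U (Suc n) j * x j) / (U (Suc n) (Suc n) - 1) + x (Suc n)"
  shows "mv (Suc n) U x i - mv (Suc n) (pi_last n U) x i
      = c * (mv (Suc n) U (evec (Suc n)) i - evec (Suc n) i)"
proof (cases "i \<in> {1..Suc n}")
  case False thus ?thesis by (auto simp: mv_def evec_def)
next
  case True
  define m where "m = Suc n"
  define d' where "d' = U m m - 1"
  have d': "d' \<noteq> 0" using d by (simp add: d'_def m_def)
  have Ux: "mv m U x i = (\<Sum>j=1..n. U i j * x j) + U i m * x m" using True by (simp add: mv_def m_def)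
  have Ue: "mv m U (evec m) i = U i m" using True by (simp add: mv_evec m_def)
  show ?thesis
  proof (cases "i = m")
    case False
    hence i: "i \<in> {1..n}" using True by (auto simp: m_def)
    have "mv m (pi_last n U) x i = (\<Sum>j=1..n. (U i j - U i m * U m j / d') * x j)"
      using i by (simp add: mv_def pi_last_def m_def d'_def idm_def)
    also have "\<dots> = (\<Sum>j=1..n. U i j * x j) - U i m / d' * (\<Sum>j=1..n. U m j * x j)"
      by (simp add: algebra_simps sum_subtractf sum_distrib_left)
    finally show ?thesis using False d' unfolding m_def[symmetric] Ux Ue
      by (simp add: c_def evec_def m_def[symmetric] d'_def[symmetric] field_simps)
  next
    case im: True
    have "mv m (pi_last n U) x i = x m" using im by (simp add: mv_def pi_last_def m_def idm_def)
    moreover have "U m m = d' + 1" by (simp add: d'_def)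
    ultimately show ?thesis using im d' unfolding m_def[symmetric] Ux Ue
      by (simp add: c_def evec_def m_def[symmetric] d'_def[symmetric] field_simps)
  qed
qed

definition pi_cond :: "nat \<Rightarrow> (nat \<Rightarrow> nat \<Rightarrow> complex) \<Rightarrow> (nat \<Rightarrow> nat \<Rightarrow> complex) \<Rightarrow> bool" where
  "pi_cond n U v \<longleftrightarrow> (\<forall>x\<in>Cn (Suc n). \<exists>y\<in>Cn (Suc n). (\<forall>i\<in>{1..n}. y i = 0) \<and>
      (\<lambda>i. mv (Suc n) U x i - mv (Suc n) v x i) = (\<lambda>i. mv (Suc n) U y i - y i))"

lemma pi_cond_pi_last:
  assumes "U (Suc n) (Suc n) \<noteq> 1"
  shows "pi_cond n U (pi_last n U)"
  unfolding pi_cond_def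
proof
  fix x :: "nat \<Rightarrow> complex"
  define c where "c = (\<Sum>j=1..n. U (Suc n) j * x j) / (U (Suc n) (Suc n) - 1) + x (Suc n)"
  define y where "y = (\<lambda>i. c * evec (Suc n) i)"
  have "y \<in> Cn (Suc n)" "\<forall>i\<in>{1..n}. y i = 0" by (auto simp: y_def Cn_def evec_def)
  moreover have "(\<lambda>i. mv (Suc n) U x i - mv (Suc n) (pi_last n U) x i) = (\<lambda>i. mv (Suc n) U y i - y i)"
    using pi_last_rank_one[where U = U and n = n and x = x, OF assms] by (simp add: y_def c_def mv_scale right_diff_distrib)
  ultimately show "\<exists>y\<in>Cn (Suc n). (\<forall>i\<in>{1..n}. y i = 0) \<and>
      (\<lambda>i. mv (Suc n) U x i - mv (Suc n) (pi_last n U) x i) = (\<lambda>i. mv (Suc n) U y i - y i)"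
    by blast
qed

text \<open>Testing the condition on \<open>e\<^sub>j\<close>, the last coordinate determines the multiple of
  \<open>(U - Id) e\<^sub>n\<^sub>+\<^sub>1\<close> by which \<open>U e\<^sub>j\<close> and \<open>v e\<^sub>j\<close> differ, because \<open>U\<^sub>n\<^sub>+\<^sub>1\<^sub>,\<^sub>n\<^sub>+\<^sub>1 \<noteq> 1\<close>.\<close>

lemma pi_cond_unique:
  assumes d: "U (Suc n) (Suc n) \<noteq> 1"
    and v1: "v1 \<in> Umat n" "pi_cond n U v1" and v2: "v2 \<in> Umat n" "pi_cond n U v2"
  shows "v1 = v2"
proof (intro ext)
  fix i j
  let ?m = "Suc n"
  show "v1 i j = v2 i j"
  proof (cases "i \<in> {1..n} \<and> j \<in> {1..n}")
    case False thus ?thesis using Umat_outside[OF v1(1)] Umat_outside[OF v2(1)] by metis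
  next
    case True
    have jm: "j \<in> {1..?m}" and im: "i \<in> {1..?m}" using True by auto
    have ej: "evec j \<in> Cn ?m" using jm by (auto simp: Cn_def evec_def)
    have key: "\<exists>c. mv ?m v (evec j) i = mv ?m U (evec j) i - U i ?m * c \<and> U ?m j = (U ?m ?m - 1) * c"
      if vU: "v \<in> Umat n" and vP: "pi_cond n U v" for v
    proof -
      obtain y where y: "\<forall>l\<in>{1..n}. y l = 0"
        "(\<lambda>i. mv ?m U (evec j) i - mv ?m v (evec j) i) = (\<lambda>i. mv ?m U y i - y i)"
        using vP ej unfolding pi_cond_def by blast
      have Uy: "mv ?m U y a = (if a \<in> {1..?m} then U a ?m * y ?m else 0)" for a
        using y(1) by (simp add: mv_def)
      have "v ?m j = 0" using Umat_outside[OF vU, of ?m j] True by (simp add: idm_def)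
      hence "U ?m j = U ?m ?m * y ?m - y ?m"
        using fun_cong[OF y(2), of ?m] jm by (simp add: mv_evec Uy)
      moreover have diff: "mv ?m U (evec j) i - mv ?m v (evec j) i = U i ?m * y ?m"
        using fun_cong[OF y(2), of i] im True y(1) by (simp add: Uy)
      moreover have "mv ?m v (evec j) i = mv ?m U (evec j) i - U i ?m * y ?m"
        by (simp flip: diff)
      ultimately show ?thesis by (intro exI[of _ "y ?m"]) (simp add: algebra_simps)
    qed
    obtain c1 where c1: "mv ?m v1 (evec j) i = mv ?m U (evec j) i - U i ?m * c1" "U ?m j = (U ?m ?m - 1) * c1"
      using key[OF v1] by blast
    obtain c2 where c2: "mv ?m v2 (evec j) i = mv ?m U (evec j) i - U i ?m * c2" "U ?m j = (U ?m ?m - 1) * c2"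
      using key[OF v2] by blast
    have "c1 = c2" using c1(2) c2(2) d by simp
    hence "mv ?m v1 (evec j) i = mv ?m v2 (evec j) i" using c1(1) c2(1) by simp
    thus ?thesis using im by (simp add: mv_evec[OF jm])
  qed
qed

lemma pi_proj_Suc:
  assumes "U \<in> Umat (Suc n)" "U (Suc n) (Suc n) \<noteq> 1"
  shows "pi_proj (Suc n) n U = pi_last n U"
  unfolding pi_proj_def pi_cond_def[symmetric]
  using pi_last_Umat[OF assms] pi_cond_pi_last[where U = U and n = n, OF assms(2)]
    pi_cond_unique[where U = U and n = n, OF assms(2)]
  by (intro the_equality) auto

section \<open>Eigenvalues of a unitary extension\<close>

locale unitary_extension =
  fixes n :: nat and U V F :: "nat \<Rightarrow> nat \<Rightarrow> complex"
    and th :: "nat \<Rightarrow> real" and \<mu> :: "nat \<Rightarrow> complex" and \<nu> :: complex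
  assumes n_pos: "n \<ge> 1"
    and U: "U \<in> Umat (Suc n)" and V: "pi_proj (Suc n) n U = V"
    and F: "orthonormal_basis n F"
    and eig: "\<forall>k\<in>{1..n}. mv n V (F k) = (\<lambda>i. exp (\<i> * complex_of_real (th k)) * F k i)"
    and dec: "mv (Suc n) U (evec (Suc n)) = (\<lambda>i. (\<Sum>k=1..n. \<mu> k * F k i) + \<nu> * evec (Suc n) i)"
    and th_range: "\<forall>k\<in>{1..n}. 0 < th k \<and> th k < 2*pi"
    and th_mono: "\<forall>k\<in>{1..n}. \<forall>l\<in>{1..n}. k < l \<longrightarrow> th k < th l"
    and mu_nz: "\<forall>k\<in>{1..n}. \<mu> k \<noteq> 0"
    and nu_nz: "\<nu> \<noteq> 0"
begin

abbreviation "m \<equiv> Suc n"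

definition x :: "nat \<Rightarrow> complex" where "x = mv m U (evec m)"

lemma F_Cn: "k \<in> {1..n} \<Longrightarrow> F k \<in> Cn n"
  using F unfolding orthonormal_basis_def by blast

lemma F_last: "k \<in> {1..n} \<Longrightarrow> F k m = 0"
  using F_Cn unfolding Cn_def by auto

lemma x_last: "x m = \<nu>"
  unfolding x_def dec using F_last by (simp add: evec_def)

lemma cinner_x_F: "k \<in> {1..n} \<Longrightarrow> cinner n x (F k) = \<mu> k"
proof -
  assume k: "k \<in> {1..n}"
  have "cinner n x (F k) = cinner n (\<lambda>i. \<Sum>l=1..n. \<mu> l * F l i) (F k)"
    by (rule cinner_cong) (unfold x_def dec, simp add: evec_def)
  thus ?thesis using cinner_onb_coeff[OF F k] by simp
qed

lemma sum_cmod_mu_sq: "(\<Sum>k=1..n. (cmod (\<mu> k))^2) = 1 - (cmod \<nu>)^2"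
proof -
  have "cinner m x x = cinner m (evec m) (evec m)" unfolding x_def by (rule Umat_cinner[OF U])
  also have "\<dots> = 1" by (subst cinner_evec) (auto simp: evec_def)
  finally have "1 = cinner n x x + \<nu> * cnj \<nu>" by (simp add: cinner_Suc x_last)
  also have "\<dots> = of_real (\<Sum>k=1..n. (cmod (\<mu> k))^2) + of_real ((cmod \<nu>)^2)"
    unfolding parseval_self[OF F] complex_norm_square by (simp add: cinner_x_F)
  finally show ?thesis by (metis of_real_add of_real_eq_1_iff add_diff_cancel_right')
qed

lemma cmod_nu_less_1: "cmod \<nu> < 1"
proof -
  have "(cmod (\<mu> 1))^2 > 0" using mu_nz n_pos by auto
  moreover have "(cmod (\<mu> 1))^2 \<le> (\<Sum>k=1..n. (cmod (\<mu> k))^2)"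
    using n_pos by (intro member_le_sum) auto
  ultimately have "(cmod \<nu>)^2 < 1" using sum_cmod_mu_sq by linarith
  thus ?thesis by (simp add: abs_square_less_1)
qed

lemma nu_ne_1: "\<nu> \<noteq> 1"
  using cmod_nu_less_1 by auto

lemma U_last_ne_1: "U m m \<noteq> 1"
  using x_last nu_ne_1 by (simp add: x_def mv_evec)

lemma V_eq: "V = pi_last n U"
  using V pi_proj_Suc[OF U U_last_ne_1] by simp

lemma mv_V_last: "mv m V w m = w m"
proof -
  have "(\<Sum>j=1..m. V m j * w j) = (\<Sum>j=1..m. idm m j * w j)"
    by (intro sum.cong) (auto simp: V_eq pi_last_def)
  thus ?thesis by (simp add: mv_def idm_def if_distrib cong: if_cong)
qed

lemma mv_V_low:
  assumes i: "i \<in> {1..n}"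
  shows "mv m V w i = (\<Sum>k=1..n. (cis (th k) * cinner n w (F k)) * F k i)"
proof -
  have "mv m V w i = (\<Sum>j=1..n. V i j * w j)" using i by (simp add: mv_def V_eq pi_last_def idm_def)
  also have "\<dots> = (\<Sum>j=1..n. V i j * (\<Sum>k=1..n. cinner n w (F k) * F k j))"
    by (intro sum.cong refl) (metis onb_expansion[OF F])
  also have "\<dots> = mv n V (\<lambda>j. \<Sum>k=1..n. cinner n w (F k) * F k j) i"
    using i by (simp add: mv_def)
  also have "\<dots> = (\<Sum>k=1..n. (cis (th k) * cinner n w (F k)) * F k i)"
    by (simp only: mv_sum) (simp add: eig cis_conv_exp mult_ac)
  finally show ?thesis .
qed

text \<open>The relations come from the coordinates of \<open>U w\<close> along \<open>F\<close> and \<open>e\<^sub>n\<^sub>+\<^sub>1\<close>, using that \<open>U\<close>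
  and \<open>V\<close> differ by a rank-one map, and from \<open>\<langle>U w, U e\<^sub>n\<^sub>+\<^sub>1\<rangle> = \<langle>w, e\<^sub>n\<^sub>+\<^sub>1\<rangle>\<close>.\<close>

lemma eigvec_relations:
  assumes ew: "mv m U w = (\<lambda>i. l * w i)"
  obtains c where "\<And>k. k \<in> {1..n} \<Longrightarrow> (l - cis (th k)) * cinner n w (F k) = c * \<mu> k"
    and "(l - 1) * w m = c * (\<nu> - 1)"
    and "l * ((\<Sum>k=1..n. cinner n w (F k) * cnj (\<mu> k)) + w m * cnj \<nu>) = w m"
proof
  define c where "c = (\<Sum>j=1..n. U m j * w j) / (U m m - 1) + w m"
  have Uw: "l * w i = mv m V w i + c * (x i - evec m i)" for i
    using pi_last_rank_one[where U = U and n = n and x = w, OF U_last_ne_1, of i]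
    by (simp add: ew V_eq c_def x_def algebra_simps)
  show "(l - 1) * w m = c * (\<nu> - 1)"
    using Uw[of m] by (simp add: mv_V_last x_last evec_def algebra_simps)
  show "(l - cis (th k)) * cinner n w (F k) = c * \<mu> k" if k: "k \<in> {1..n}" for k
  proof -
    have "l * cinner n w (F k) = cinner n (\<lambda>i. l * w i) (F k)" by (simp add: cinner_scale)
    also have "\<dots> = cinner n (\<lambda>i. (\<Sum>j=1..n. (cis (th j) * cinner n w (F j)) * F j i) + c * x i) (F k)"
      by (rule cinner_cong) (simp add: Uw mv_V_low evec_def)
    also have "\<dots> = cis (th k) * cinner n w (F k) + c * \<mu> k"
      by (simp only: cinner_add cinner_scale cinner_onb_coeff[OF F k] cinner_x_F[OF k])
    finally show ?thesis by (simp add: algebra_simps)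
  qed
  have "cinner m (mv m U w) x = w m"
    unfolding x_def Umat_cinner[OF U] by (simp add: cinner_evec)
  hence "l * (cinner n w x + w m * cnj \<nu>) = w m" by (simp add: ew cinner_scale cinner_Suc x_last)
  moreover have "cinner n w x = (\<Sum>k=1..n. cinner n w (F k) * cnj (\<mu> k))"
    by (simp add: parseval[OF F, of w x] cinner_x_F)
  ultimately show "l * ((\<Sum>k=1..n. cinner n w (F k) * cnj (\<mu> k)) + w m * cnj \<nu>) = w m" by simp
qed

lemma cis_th_ne_1: "k \<in> {1..n} \<Longrightarrow> cis (th k) \<noteq> 1"
  using th_range cis_inj_on_0_2pi[of "th k" 0] by fastforce

lemma cis_th_inj: "k \<in> {1..n} \<Longrightarrow> j \<in> {1..n} \<Longrightarrow> cis (th k) = cis (th j) \<Longrightarrow> k = j"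
  using th_range th_mono cis_inj_on_0_2pi[of "th k" "th j"]
  by (metis less_eq_real_def less_irrefl nat_neq_iff)

lemma cinner_self_eq_0_if_coords:
  assumes "\<forall>k\<in>{1..n}. cinner n w (F k) = 0" "w m = 0"
  shows "cinner m w w = 0"
  using assms by (simp add: cinner_Suc parseval_self[OF F])

lemma eigval_ne_1:
  assumes ew: "mv m U w = (\<lambda>i. l * w i)" and nz: "cinner m w w \<noteq> 0"
  shows "l \<noteq> 1"
proof
  assume l: "l = 1"
  obtain c where R1: "\<And>k. k \<in> {1..n} \<Longrightarrow> (l - cis (th k)) * cinner n w (F k) = c * \<mu> k"
    and R2: "(l - 1) * w m = c * (\<nu> - 1)"
    and R3: "l * ((\<Sum>k=1..n. cinner n w (F k) * cnj (\<mu> k)) + w m * cnj \<nu>) = w m"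
    using eigvec_relations[OF ew] by blast
  have "c = 0" using R2 l nu_ne_1 by simp
  hence coords: "\<forall>k\<in>{1..n}. cinner n w (F k) = 0"
    using R1 cis_th_ne_1 l by (metis mult_eq_0_iff mult_zero_left right_minus_eq)
  hence "w m * (cnj \<nu> - 1) = 0" using R3 l by (simp add: algebra_simps)
  moreover have "cnj \<nu> \<noteq> 1" using nu_ne_1 by (metis complex_cnj_one_iff)
  ultimately have "w m = 0" by simp
  thus False using cinner_self_eq_0_if_coords[OF coords] nz by simp
qed

lemma eigval_ne_cis_th:
  assumes ew: "mv m U w = (\<lambda>i. l * w i)" and nz: "cinner m w w \<noteq> 0" and k0: "k0 \<in> {1..n}"
  shows "l \<noteq> cis (th k0)"
proof
  assume l: "l = cis (th k0)"
  obtain c where R1: "\<And>k. k \<in> {1..n} \<Longrightarrow> (l - cis (th k)) * cinner n w (F k) = c * \<mu> k"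
    and R2: "(l - 1) * w m = c * (\<nu> - 1)"
    and R3: "l * ((\<Sum>k=1..n. cinner n w (F k) * cnj (\<mu> k)) + w m * cnj \<nu>) = w m"
    using eigvec_relations[OF ew] by blast
  have "c = 0" using R1[OF k0] l mu_nz k0 by simp
  hence last: "w m = 0" using R2 cis_th_ne_1[OF k0] l by simp
  have others: "cinner n w (F k) = 0" if "k \<in> {1..n}" "k \<noteq> k0" for k
    using R1[OF that(1)] \<open>c = 0\<close> cis_th_inj[OF k0 that(1)] l that(2) by auto
  have "(\<Sum>k=1..n. cinner n w (F k) * cnj (\<mu> k)) = cinner n w (F k0) * cnj (\<mu> k0)"
    using others k0 by (intro sum.remove[THEN trans] sum.neutral[THEN arg_cong[where f = "(+) _"], THEN trans]) auto
  hence "cinner n w (F k0) * cnj (\<mu> k0) = 0" using R3 last l by simp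
  hence "cinner n w (F k0) = 0" using mu_nz k0 by auto
  hence "\<forall>k\<in>{1..n}. cinner n w (F k) = 0" using others by metis
  thus False using cinner_self_eq_0_if_coords last nz by blast
qed

lemma eigvec_last_coord_eq_0:
  assumes ew: "mv m U w = (\<lambda>i. l * w i)" and l: "\<forall>k\<in>{1..n}. l \<noteq> cis (th k)" and last: "w m = 0"
  shows "cinner m w w = 0"
proof -
  obtain c where R1: "\<And>k. k \<in> {1..n} \<Longrightarrow> (l - cis (th k)) * cinner n w (F k) = c * \<mu> k"
    and R2: "(l - 1) * w m = c * (\<nu> - 1)"
    using eigvec_relations[OF ew] by blast
  have "c = 0" using R2 last nu_ne_1 by simp
  hence "\<forall>k\<in>{1..n}. cinner n w (F k) = 0" using R1 l by simp
  thus ?thesis using cinner_self_eq_0_if_coords last by blast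
qed

lemma secular_equation:
  assumes ew: "mv m U w = (\<lambda>i. l * w i)" and nz: "cinner m w w \<noteq> 0"
  shows "l * (\<Sum>k=1..n. (cmod (\<mu> k))\<^sup>2 / (l - cis (th k))) = (\<nu> - 1) * (1 - l * cnj \<nu>) / (l - 1)"
proof -
  have l1: "l - 1 \<noteq> 0" using eigval_ne_1[OF ew nz] by simp
  have l: "\<forall>k\<in>{1..n}. l \<noteq> cis (th k)" using eigval_ne_cis_th[OF ew nz] by blast
  obtain c where R1: "\<And>k. k \<in> {1..n} \<Longrightarrow> (l - cis (th k)) * cinner n w (F k) = c * \<mu> k"
    and R2: "(l - 1) * w m = c * (\<nu> - 1)"
    and R3: "l * ((\<Sum>k=1..n. cinner n w (F k) * cnj (\<mu> k)) + w m * cnj \<nu>) = w m"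
    using eigvec_relations[OF ew] by blast
  have coords: "cinner n w (F k) = c * \<mu> k / (l - cis (th k))" if "k \<in> {1..n}" for k
    using R1[OF that] l that by (simp add: field_simps)
  have last: "w m = c * (\<nu> - 1) / (l - 1)" using R2 l1 by (simp add: field_simps)
  have "c \<noteq> 0" using eigvec_last_coord_eq_0[OF ew l] last nz by auto
  have "(\<Sum>k=1..n. cinner n w (F k) * cnj (\<mu> k)) = c * (\<Sum>k=1..n. (cmod (\<mu> k))\<^sup>2 / (l - cis (th k)))"
    unfolding sum_distrib_left
    by (intro sum.cong refl) (simp add: coords mult_ac flip: complex_norm_square)
  hence "c * (l * (\<Sum>k=1..n. (cmod (\<mu> k))\<^sup>2 / (l - cis (th k))))
      = c * ((\<nu> - 1) * (1 - l * cnj \<nu>) / (l - 1))"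
    using R3 l1 unfolding last by (simp add: field_simps)
  thus ?thesis using \<open>c \<noteq> 0\<close> by (metis mult_left_cancel)
qed

definition \<rho> :: real where "\<rho> = cmod \<nu>"
definition \<psi> :: real where "\<psi> = Arg \<nu>"
definition \<gamma> :: "nat \<Rightarrow> real" where "\<gamma> k = (cmod (\<mu> k))\<^sup>2 / (1 - (cmod \<nu>)\<^sup>2)"
definition Phi :: "real \<Rightarrow> real" where
  "Phi \<eta> = (1 + \<rho>\<^sup>2) * cos (\<eta> / 2) - 2 * \<rho> * cos (\<eta> / 2 - \<psi>)
    + (1 - \<rho>\<^sup>2) * sin (\<eta> / 2) * (\<Sum>k=1..n. \<gamma> k * cot ((\<eta> - th k) / 2))"

lemma rho_pos: "0 < \<rho>" using nu_nz by (simp add: \<rho>_def)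

lemma rho_less_1: "\<rho> < 1" using cmod_nu_less_1 by (simp add: \<rho>_def)

lemma one_minus_rho_sq_pos: "1 - \<rho>\<^sup>2 > 0"
  using rho_pos rho_less_1 by (simp add: abs_square_less_1)

lemma gamma_nonneg: "\<gamma> k \<ge> 0"
  using one_minus_rho_sq_pos by (simp add: \<gamma>_def \<rho>_def)

lemma sum_gamma: "(\<Sum>k=1..n. \<gamma> k) = 1"
proof -
  have "(\<Sum>k=1..n. \<gamma> k) = (\<Sum>k=1..n. (cmod (\<mu> k))\<^sup>2) / (1 - (cmod \<nu>)\<^sup>2)"
    by (simp add: \<gamma>_def sum_divide_distrib)
  also have "\<dots> = 1" using sum_cmod_mu_sq one_minus_rho_sq_pos by (simp add: \<rho>_def)
  finally show ?thesis .
qed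

lemma Phi_eigval_zero:
  assumes ew: "mv m U w = (\<lambda>i. cis t * w i)" and nz: "cinner m w w \<noteq> 0"
  shows "Phi t = 0"
proof -
  define S where "S = (\<Sum>k=1..n. \<gamma> k * cot ((t - th k) / 2))"
  have sin_ne: "sin ((t - th k) / 2) \<noteq> 0" if "k \<in> {1..n}" for k
    using sin_half_diff_eq_0_imp_cis_eq eigval_ne_cis_th[OF ew nz that] by blast
  have "cis t * (\<Sum>k=1..n. (cmod (\<mu> k))\<^sup>2 / (cis t - cis (th k)))
      = (\<Sum>k=1..n. of_real ((cmod (\<mu> k))\<^sup>2) * (cis t / (cis t - cis (th k))))"
    unfolding sum_distrib_left by (intro sum.cong refl) simp
  also have "\<dots> = (\<Sum>k=1..n. of_real ((cmod (\<mu> k))\<^sup>2) * (1/2 - \<i>/2 * of_real (cot ((t - th k) / 2))))"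
    by (intro sum.cong refl) (simp add: cis_div_cis_diff[OF sin_ne])
  also have "\<dots> = of_real (\<Sum>k=1..n. (cmod (\<mu> k))\<^sup>2) / 2
      - \<i>/2 * of_real (\<Sum>k=1..n. (cmod (\<mu> k))\<^sup>2 * cot ((t - th k) / 2))"
    by (simp add: sum_distrib_left sum_subtractf sum_divide_distrib algebra_simps)
  also have "(\<Sum>k=1..n. (cmod (\<mu> k))\<^sup>2 * cot ((t - th k) / 2)) = (1 - \<rho>\<^sup>2) * S"
    unfolding S_def sum_distrib_left using one_minus_rho_sq_pos
    by (intro sum.cong refl) (simp add: \<gamma>_def \<rho>_def)
  also have "(\<Sum>k=1..n. (cmod (\<mu> k))\<^sup>2) = 1 - \<rho>\<^sup>2" unfolding \<rho>_def by (rule sum_cmod_mu_sq)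
  finally have sum_cot: "cis t * (\<Sum>k=1..n. (cmod (\<mu> k))\<^sup>2 / (cis t - cis (th k)))
      = of_real (1 - \<rho>\<^sup>2) / 2 - \<i> / 2 * of_real ((1 - \<rho>\<^sup>2) * S)" .
  have "(1 - (of_real \<rho>)^2) / 2 * (1 - \<i> * of_real S)
      = of_real (1 - \<rho>\<^sup>2) / 2 - \<i> / 2 * of_real ((1 - \<rho>\<^sup>2) * S)"
    by (simp add: field_simps)
  also have "\<dots> = (\<nu> - 1) * (1 - cis t * cnj \<nu>) / (cis t - 1)"
    unfolding sum_cot[symmetric] by (rule secular_equation[OF ew nz])
  finally have secular_cot: "(1 - (of_real \<rho>)^2) / 2 * (1 - \<i> * of_real S)
      = (\<nu> - 1) * (1 - cis t * cnj \<nu>) / (cis t - 1)" .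
  have "(1 - (of_real \<rho>)^2) / 2 * (1 - \<i> * of_real S) * (cis t - 1)
      = (\<nu> - 1) * (1 - cis t * cnj \<nu>)"
    using secular_cot eigval_ne_1[OF ew nz] by (simp add: eq_divide_eq)
  also have "\<dots> = (of_real \<rho> * cis \<psi> - 1) * (1 - cis t * (of_real \<rho> / cis \<psi>))"
  proof -
    define r where "r = \<rho>"
    define p where "p = cis \<psi>"
    have nu: "\<nu> = of_real r * p"
      using rcis_cmod_Arg[of \<nu>] by (simp add: rcis_def r_def p_def \<rho>_def \<psi>_def)
    have "cnj p = inverse p" by (simp add: p_def cis_cnj)
    hence cnu: "cnj \<nu> = of_real r / p" unfolding nu by (simp add: divide_inverse)
    show ?thesis unfolding r_def[symmetric] p_def[symmetric] cnu by (simp only: nu)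
  qed
  finally have "(1 - (of_real \<rho>)^2) / 2 * (1 - \<i> * of_real S) * ((cis (t/2))^2 - 1)
      = (of_real \<rho> * cis \<psi> - 1) * (1 - (cis (t/2))^2 * of_real \<rho> / cis \<psi>)"
    by (simp add: cis_half_sq)
  from trig_secular_zero[OF this] show ?thesis by (simp add: Phi_def S_def)
qed

text \<open>\<open>c\<^sub>0 = |1 - \<nu>|\<^sup>2\<close>.\<close>

definition c0 :: real where "c0 = 1 + \<rho>\<^sup>2 - 2 * \<rho> * cos \<psi>"

lemma c0_pos: "c0 > 0"
proof -
  have "\<rho> * cos \<psi> \<le> \<rho>" using rho_pos by (simp add: mult_left_le)
  hence "(1 - \<rho>)\<^sup>2 \<le> c0" by (simp add: c0_def power2_eq_square algebra_simps)
  moreover have "(1 - \<rho>)\<^sup>2 > 0" using rho_less_1 by simp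
  ultimately show ?thesis by linarith
qed

lemma Phi_0: "Phi 0 = c0"
  by (simp add: Phi_def c0_def)

lemma Phi_2pi: "Phi (2 * pi) = - c0"
  by (simp add: Phi_def c0_def cos_diff)

text \<open>On \<open>(0, 2\<pi>)\<close>, \<open>Phi\<close> is \<open>sin(\<eta>/2)\<close> times a sum of cotangents with nonnegative
  coefficients, which is strictly decreasing between consecutive \<open>th k\<close>.\<close>

definition g :: "real \<Rightarrow> real" where
  "g \<eta> = c0 * cot (\<eta> / 2) - 2 * \<rho> * sin \<psi> + (1 - \<rho>\<^sup>2) * (\<Sum>k=1..n. \<gamma> k * cot ((\<eta> - th k) / 2))"

lemma Phi_eq_sin_mult_g:
  assumes "0 < \<eta>" "\<eta> < 2 * pi"
  shows "Phi \<eta> = sin (\<eta> / 2) * g \<eta>"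
proof -
  have "sin (\<eta> / 2) > 0" using assms by (intro sin_gt_zero) auto
  hence "sin (\<eta> / 2) * cot (\<eta> / 2) = cos (\<eta> / 2)" by (simp add: cot_def)
  thus ?thesis unfolding Phi_def g_def c0_def cos_diff by (simp add: algebra_simps)
qed

lemma g_strict_antimono:
  assumes \<eta>: "0 < \<eta>1" "\<eta>1 < \<eta>2" "\<eta>2 < 2 * pi"
    and gap: "\<forall>k\<in>{1..n}. th k < \<eta>1 \<or> \<eta>2 < th k"
  shows "g \<eta>2 < g \<eta>1"
proof -
  have "cot (\<eta>2 / 2) < cot (\<eta>1 / 2)"
  proof (rule cot_less_cot)
    have "sin (\<eta>1 / 2) > 0" "sin (\<eta>2 / 2) > 0" using \<eta> by (auto intro!: sin_gt_zero)
    thus "sin (\<eta>1 / 2) * sin (\<eta>2 / 2) > 0" by simp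
  qed (use \<eta> in auto)
  hence "c0 * cot (\<eta>2 / 2) < c0 * cot (\<eta>1 / 2)" using c0_pos by simp
  moreover have "\<gamma> k * cot ((\<eta>2 - th k) / 2) \<le> \<gamma> k * cot ((\<eta>1 - th k) / 2)" if k: "k \<in> {1..n}" for k
  proof (rule mult_left_mono[OF less_imp_le gamma_nonneg], rule cot_less_cot)
    have th: "0 < th k" "th k < 2 * pi" using th_range k by auto
    show "(\<eta>1 - th k) / 2 < (\<eta>2 - th k) / 2" "(\<eta>2 - th k) / 2 - (\<eta>1 - th k) / 2 < pi"
      using \<eta> by (auto simp: field_simps)
    consider "th k < \<eta>1" | "\<eta>2 < th k" using gap k by blast
    thus "sin ((\<eta>1 - th k) / 2) * sin ((\<eta>2 - th k) / 2) > 0"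
    proof cases
      case 1
      hence "sin ((\<eta>1 - th k) / 2) > 0" "sin ((\<eta>2 - th k) / 2) > 0"
        using \<eta> th by (auto intro!: sin_gt_zero)
      thus ?thesis by simp
    next
      case 2
      hence "sin ((th k - \<eta>1) / 2) > 0" "sin ((th k - \<eta>2) / 2) > 0"
        using \<eta> th by (auto intro!: sin_gt_zero)
      moreover have "sin ((\<eta>1 - th k) / 2) = - sin ((th k - \<eta>1) / 2)"
        "sin ((\<eta>2 - th k) / 2) = - sin ((th k - \<eta>2) / 2)"
        by (simp_all add: sin_minus[symmetric] minus_divide_left)
      ultimately show ?thesis by simp
    qed
  qed
  hence "(\<Sum>k=1..n. \<gamma> k * cot ((\<eta>2 - th k) / 2)) \<le> (\<Sum>k=1..n. \<gamma> k * cot ((\<eta>1 - th k) / 2))"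
    by (rule sum_mono)
  hence "(1 - \<rho>\<^sup>2) * (\<Sum>k=1..n. \<gamma> k * cot ((\<eta>2 - th k) / 2))
      \<le> (1 - \<rho>\<^sup>2) * (\<Sum>k=1..n. \<gamma> k * cot ((\<eta>1 - th k) / 2))"
    using one_minus_rho_sq_pos by (intro mult_left_mono) auto
  ultimately show ?thesis unfolding g_def by linarith
qed

lemma Phi_zero_unique_in_gap:
  assumes \<eta>: "0 < \<eta>1" "\<eta>1 \<le> \<eta>2" "\<eta>2 < 2 * pi"
    and gap: "\<forall>k\<in>{1..n}. th k < \<eta>1 \<or> \<eta>2 < th k"
    and zero: "Phi \<eta>1 = 0" "Phi \<eta>2 = 0"
  shows "\<eta>1 = \<eta>2"
proof (rule ccontr)
  assume "\<eta>1 \<noteq> \<eta>2"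
  hence lt: "\<eta>1 < \<eta>2" using \<eta> by simp
  have "sin (\<eta>1 / 2) > 0" "sin (\<eta>2 / 2) > 0" using \<eta> by (auto intro!: sin_gt_zero)
  hence "g \<eta>1 = 0" "g \<eta>2 = 0" using zero Phi_eq_sin_mult_g \<eta> lt by auto
  thus False using g_strict_antimono[OF \<eta>(1) lt \<eta>(3) gap] by simp
qed

definition th_ext :: "nat \<Rightarrow> real" where
  "th_ext k = (if k = 0 then 0 else if k = Suc n then 2 * pi else th k)"

lemma th_ext_th: "k \<in> {1..n} \<Longrightarrow> th_ext k = th k"
  by (simp add: th_ext_def)

lemma th_ext_strict_mono: "i < j \<Longrightarrow> j \<le> Suc n \<Longrightarrow> th_ext i < th_ext j"
  using th_range th_mono by (auto simp: th_ext_def)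

lemma th_ext_mono: "i \<le> j \<Longrightarrow> j \<le> Suc n \<Longrightarrow> th_ext i \<le> th_ext j"
  using th_ext_strict_mono by (cases "i = j") (auto intro: less_imp_le)

lemma gap_exists:
  assumes "0 < \<eta>" "\<eta> < 2 * pi" "\<forall>k\<in>{1..n}. \<eta> \<noteq> th k"
  obtains k where "k \<le> n" "th_ext k < \<eta>" "\<eta> < th_ext (Suc k)"
proof -
  define K where "K = {k \<in> {0..n}. th_ext k < \<eta>}"
  have "finite K" "0 \<in> K" using assms by (auto simp: K_def th_ext_def)
  hence k: "Max K \<in> K" "\<forall>k\<in>K. k \<le> Max K" by (auto intro: Max_in)
  have "\<eta> < th_ext (Suc (Max K))"
  proof (cases "Max K = n")
    case False
    hence s: "Suc (Max K) \<in> {1..n}" using k by (auto simp: K_def)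
    have "Suc (Max K) \<notin> K" using k(2) by fastforce
    hence "\<not> th_ext (Suc (Max K)) < \<eta>" using s by (auto simp: K_def)
    moreover have "th_ext (Suc (Max K)) \<noteq> \<eta>" using assms(3) s th_ext_th by metis
    ultimately show ?thesis by linarith
  qed (use assms in \<open>simp add: th_ext_def\<close>)
  thus ?thesis using that k by (auto simp: K_def)
qed

lemma gap_avoids_th:
  assumes k: "k \<le> n" and "th_ext k < a" "a \<le> b" "b < th_ext (Suc k)"
  shows "\<forall>l\<in>{1..n}. th l < a \<or> b < th l"
proof
  fix l assume l: "l \<in> {1..n}"
  show "th l < a \<or> b < th l"
  proof (cases "l \<le> k")
    case True
    thus ?thesis using th_ext_mono[of l k] k assms th_ext_th[OF l] by auto
  next
    case False
    thus ?thesis using th_ext_mono[of "Suc k" l] l assms th_ext_th[OF l] by auto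
  qed
qed

end

section \<open>Interlacing\<close>

lemma strict_mono_bounded_eq:
  fixes f :: "nat \<Rightarrow> nat"
  assumes mono: "\<And>i j. 1 \<le> i \<Longrightarrow> i < j \<Longrightarrow> j \<le> Suc N \<Longrightarrow> f i < f j"
    and bound: "\<And>j. 1 \<le> j \<Longrightarrow> j \<le> Suc N \<Longrightarrow> f j \<le> N"
    and j: "1 \<le> j" "j \<le> Suc N"
  shows "f j = j - 1"
proof -
  have lower: "j - 1 \<le> f j" if "1 \<le> j" "j \<le> Suc N" for j
    using that
  proof (induction j)
    case (Suc j)
    thus ?case using mono[of j "Suc j"] by (cases "j = 0") auto
  qed simp
  have upper: "f (Suc N - d) + d \<le> N" if "d \<le> N" for d
    using that
  proof (induction d)
    case (Suc d)
    have "f (Suc N - Suc d) < f (Suc N - d)" using mono[of "Suc N - Suc d" "Suc N - d"] Suc by auto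
    thus ?case using Suc by simp
  qed (use bound in simp)
  have "f j + (Suc N - j) \<le> N" using upper[of "Suc N - j"] j by simp
  thus ?thesis using lower[OF j] j by simp
qed

locale unitary_extension_spectrum = unitary_extension +
  fixes G :: "nat \<Rightarrow> nat \<Rightarrow> complex" and t :: "nat \<Rightarrow> real"
  assumes G: "orthonormal_basis (Suc n) G"
    and G_eig: "\<forall>j\<in>{1..Suc n}. mv (Suc n) U (G j) = (\<lambda>i. exp (\<i> * complex_of_real (t j)) * G j i)"
    and t_range: "\<forall>j\<in>{1..Suc n}. 0 \<le> t j \<and> t j < 2 * pi"
    and t_sorted: "\<forall>j\<in>{1..Suc n}. \<forall>j'\<in>{1..Suc n}. j \<le> j' \<longrightarrow> t j \<le> t j'"
begin

lemma G_eig_cis: "j \<in> {1..m} \<Longrightarrow> mv m U (G j) = (\<lambda>i. cis (t j) * G j i)"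
  using G_eig by (simp add: cis_conv_exp)

lemma cinner_G_G: "j \<in> {1..m} \<Longrightarrow> j' \<in> {1..m} \<Longrightarrow> cinner m (G j) (G j') = idm j j'"
  using G unfolding orthonormal_basis_def by blast

lemma cinner_G_self_ne_0: "j \<in> {1..m} \<Longrightarrow> cinner m (G j) (G j) \<noteq> 0"
  using cinner_G_G[of j j] by (simp add: idm_def)

lemma Phi_t: "j \<in> {1..m} \<Longrightarrow> Phi (t j) = 0"
  using Phi_eigval_zero[OF G_eig_cis cinner_G_self_ne_0] .

lemma t_pos:
  assumes j: "j \<in> {1..m}" shows "0 < t j"
proof -
  have "cis (t j) \<noteq> 1" using eigval_ne_1[OF G_eig_cis[OF j] cinner_G_self_ne_0[OF j]] .
  hence "t j \<noteq> 0" by auto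
  thus ?thesis using t_range j by force
qed

lemma t_less_2pi: "j \<in> {1..m} \<Longrightarrow> t j < 2 * pi"
  using t_range by blast

lemma t_ne_th:
  assumes j: "j \<in> {1..m}" and k: "k \<in> {1..n}" shows "t j \<noteq> th k"
  using eigval_ne_cis_th[OF G_eig_cis[OF j] cinner_G_self_ne_0[OF j] k] by auto

text \<open>Two orthogonal eigenvectors for one eigenvalue would combine into an eigenvector with
  vanishing last coordinate.\<close>

lemma t_inj:
  assumes j: "j \<in> {1..m}" and j': "j' \<in> {1..m}" and eq: "t j = t j'"
  shows "j = j'"
proof (rule ccontr)
  assume "j \<noteq> j'"
  define l where "l = cis (t j)"
  have e: "mv m U (G j) = (\<lambda>i. l * G j i)" "mv m U (G j') = (\<lambda>i. l * G j' i)"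
    using G_eig_cis[OF j] G_eig_cis[OF j'] eq by (simp_all add: l_def)
  have l: "\<forall>k\<in>{1..n}. l \<noteq> cis (th k)"
    using eigval_ne_cis_th[OF e(1) cinner_G_self_ne_0[OF j]] by blast
  have last: "G j m \<noteq> 0"
    using eigvec_last_coord_eq_0[OF e(1) l] cinner_G_self_ne_0[OF j] by blast
  define w where "w = (\<lambda>i. G j' m * G j i + (- G j m) * G j' i)"
  have "mv m U w = (\<lambda>i. l * w i)" unfolding w_def mv_lin e by (simp add: algebra_simps)
  moreover have "w m = 0" by (simp add: w_def)
  ultimately have "cinner m w w = 0" using eigvec_last_coord_eq_0 l by blast
  hence "w i = 0" if "i \<in> {1..m}" for i using cinner_self_eq_0 that by blast
  hence "cinner m w (G j') = 0" unfolding cinner_def by simp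
  moreover have "cinner m w (G j') = - G j m"
    unfolding w_def cinner_lin using cinner_G_G j j' \<open>j \<noteq> j'\<close> by (simp add: idm_def)
  ultimately show False using last by simp
qed

lemma t_strict_mono: "j \<in> {1..m} \<Longrightarrow> j' \<in> {1..m} \<Longrightarrow> j < j' \<Longrightarrow> t j < t j'"
  using t_sorted t_inj by (metis less_eq_real_def nat_less_le)

lemma gap_index_strict_mono:
  assumes j: "j \<in> {1..m}" "j' \<in> {1..m}" "j < j'"
    and k: "k \<le> n" "th_ext k < t j" "t j < th_ext (Suc k)"
    and k': "k' \<le> n" "th_ext k' < t j'" "t j' < th_ext (Suc k')"
  shows "k < k'"
proof (rule ccontr)
  assume "\<not> k < k'"
  have lt: "t j < t j'" using t_strict_mono j by blast
  show False
  proof (cases "k' = k")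
    case True
    hence "\<forall>l\<in>{1..n}. th l < t j \<or> t j' < th l" using gap_avoids_th k k' lt by simp
    hence "t j = t j'"
      using Phi_zero_unique_in_gap t_pos t_less_2pi Phi_t j lt by (meson less_imp_le)
    thus False using lt by simp
  next
    case False
    hence "th_ext (Suc k') \<le> th_ext k" using th_ext_mono \<open>\<not> k < k'\<close> k by simp
    thus False using k k' lt by linarith
  qed
qed

lemma t_in_gap:
  assumes j: "j \<in> {1..m}"
  shows "th_ext (j - 1) < t j \<and> t j < th_ext j"
proof -
  have "\<forall>j\<in>{1..m}. \<exists>k. k \<le> n \<and> th_ext k < t j \<and> t j < th_ext (Suc k)"
    using gap_exists t_pos t_less_2pi t_ne_th by metis
  then obtain idx where idx: "\<And>j. j \<in> {1..m} \<Longrightarrow> idx j \<le> n \<and> th_ext (idx j) < t j \<and> t j < th_ext (Suc (idx j))"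
    by metis
  have "idx j = j - 1"
    by (rule strict_mono_bounded_eq[where N = n])
      (use j idx gap_index_strict_mono[OF _ _ _ idx[THEN conjunct1] idx[THEN conjunct2, THEN conjunct1]
        idx[THEN conjunct2, THEN conjunct2] idx[THEN conjunct1] idx[THEN conjunct2, THEN conjunct1]
        idx[THEN conjunct2, THEN conjunct2]] in auto)
  thus ?thesis using idx[OF j] j by auto
qed

lemma interlacing: "k \<in> {1..n} \<Longrightarrow> t k < th k \<and> th k < t (Suc k)"
  using t_in_gap[of k] t_in_gap[of "Suc k"] th_ext_th by auto

lemma Phi_zero_iff:
  assumes \<eta>: "0 \<le> \<eta>" "\<eta> \<le> 2 * pi" "\<forall>k\<in>{1..n}. \<eta> \<noteq> th k"
  shows "Phi \<eta> = 0 \<longleftrightarrow> (\<exists>j\<in>{1..m}. \<eta> = t j)"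
proof
  assume zero: "Phi \<eta> = 0"
  hence "\<eta> \<noteq> 0" "\<eta> \<noteq> 2 * pi" using Phi_0 Phi_2pi c0_pos by auto
  hence "0 < \<eta>" "\<eta> < 2 * pi" using \<eta> by auto
  then obtain k where k: "k \<le> n" "th_ext k < \<eta>" "\<eta> < th_ext (Suc k)"
    using gap_exists \<eta>(3) by blast
  have j: "Suc k \<in> {1..m}" using k by simp
  hence tj: "th_ext k < t (Suc k)" "t (Suc k) < th_ext (Suc k)" using t_in_gap[OF j] by simp_all
  have "\<eta> = t (Suc k)"
  proof (cases "\<eta> \<le> t (Suc k)")
    case True
    thus ?thesis using Phi_zero_unique_in_gap[OF \<open>0 < \<eta>\<close> True t_less_2pi[OF j]]
      gap_avoids_th[OF k(1,2) True tj(2)] zero Phi_t[OF j] by blast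
  next
    case False
    thus ?thesis using Phi_zero_unique_in_gap[OF t_pos[OF j] _ \<open>\<eta> < 2 * pi\<close>]
      gap_avoids_th[OF k(1) tj(1) _ k(3)] zero Phi_t[OF j] by force
  qed
  thus "\<exists>j\<in>{1..m}. \<eta> = t j" using j by blast
qed (use Phi_t in auto)

end

section \<open>Virtual isometries\<close>

locale virtual_isometry_eigendata =
  fixes u :: "nat \<Rightarrow> nat \<Rightarrow> nat \<Rightarrow> complex"
    and \<theta> :: "nat \<Rightarrow> nat \<Rightarrow> real"
    and f :: "nat \<Rightarrow> nat \<Rightarrow> nat \<Rightarrow> complex"
    and \<mu> :: "nat \<Rightarrow> nat \<Rightarrow> complex"
    and \<nu> :: "nat \<Rightarrow> complex"
  assumes vi: "virtual_isometry u"
    and theta_range: "\<forall>n\<ge>1. \<forall>k\<in>{1..n}. 0 \<le> \<theta> n k \<and> \<theta> n k < 2 * pi"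
    and theta_sorted: "\<forall>n\<ge>1. \<forall>k\<in>{1..n}. \<forall>l\<in>{1..n}. k \<le> l \<longrightarrow> \<theta> n k \<le> \<theta> n l"
    and f_onb: "\<forall>n\<ge>1. orthonormal_basis n (f n)"
    and f_eigen: "\<forall>n\<ge>1. \<forall>k\<in>{1..n}.
        mv n (u n) (f n k) = (\<lambda>i. exp (\<i> * complex_of_real (\<theta> n k)) * f n k i)"
    and decomp: "\<forall>n\<ge>1. mv (n+1) (u (n+1)) (evec (n+1)) =
        (\<lambda>i. (\<Sum>k=1..n. \<mu> n k * f n k i) + \<nu> n * evec (n+1) i)"
    and u1: "u 1 \<noteq> idm"
    and nu_nz: "\<forall>n\<ge>1. \<nu> n \<noteq> 0"
    and mu_nz: "\<forall>n\<ge>1. \<forall>k\<in>{1..n}. \<mu> n k \<noteq> 0"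
begin

lemma unitary_extension_spectrum_step:
  assumes n: "n \<ge> 1"
    and range: "\<forall>k\<in>{1..n}. 0 < \<theta> n k \<and> \<theta> n k < 2 * pi"
    and mono: "\<forall>k\<in>{1..n}. \<forall>l\<in>{1..n}. k < l \<longrightarrow> \<theta> n k < \<theta> n l"
  shows "unitary_extension_spectrum n (u (Suc n)) (u n) (f n) (\<theta> n) (\<mu> n) (\<nu> n) (f (Suc n)) (\<theta> (Suc n))"
  using n range mono vi theta_range theta_sorted f_onb f_eigen decomp nu_nz mu_nz
  by unfold_locales (auto simp: virtual_isometry_def)

lemma theta_1_pos: "0 < \<theta> 1 1"
proof -
  have U: "u 1 \<in> Umat 1" using vi by (simp add: virtual_isometry_def)
  have "cinner 1 (f 1 1) (f 1 1) = 1" using f_onb by (simp add: orthonormal_basis_def idm_def)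
  hence "f 1 1 1 \<noteq> 0" by (auto simp: cinner_def)
  moreover have "u 1 1 1 * f 1 1 1 = exp (\<i> * complex_of_real (\<theta> 1 1)) * f 1 1 1"
    using fun_cong[OF f_eigen[rule_format, of 1 1], of 1] by (simp add: mv_def)
  ultimately have u11: "u 1 1 1 = exp (\<i> * complex_of_real (\<theta> 1 1))" by simp
  have "\<theta> 1 1 \<noteq> 0"
  proof
    assume "\<theta> 1 1 = 0"
    hence "u 1 i j = idm i j" for i j
      using u11 Umat_outside[OF U, of i j] by (cases "i = 1 \<and> j = 1") (auto simp: idm_def)
    thus False using u1 by blast
  qed
  thus ?thesis using theta_range by force
qed

lemma theta_pos_strict_mono:
  assumes "n \<ge> 1"
  shows "(\<forall>k\<in>{1..n}. 0 < \<theta> n k \<and> \<theta> n k < 2 * pi)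
    \<and> (\<forall>k\<in>{1..n}. \<forall>l\<in>{1..n}. k < l \<longrightarrow> \<theta> n k < \<theta> n l)"
  using assms
proof (induction n rule: nat_induct_at_least)
  case base
  thus ?case using theta_1_pos theta_range by auto
next
  case (Suc n)
  interpret unitary_extension_spectrum n "u (Suc n)" "u n" "f n" "\<theta> n" "\<mu> n" "\<nu> n" "f (Suc n)" "\<theta> (Suc n)"
    using Suc unitary_extension_spectrum_step by blast
  show ?case using t_pos t_less_2pi t_strict_mono by blast
qed

end

theorem proposition4p5:
  fixes u :: "nat \<Rightarrow> nat \<Rightarrow> nat \<Rightarrow> complex"
    and \<theta> :: "nat \<Rightarrow> nat \<Rightarrow> real"
    and f :: "nat \<Rightarrow> nat \<Rightarrow> nat \<Rightarrow> complex"
    and \<mu> :: "nat \<Rightarrow> nat \<Rightarrow> complex"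
    and \<nu> :: "nat \<Rightarrow> complex"
  assumes vi: "virtual_isometry u"
    and theta_range: "\<forall>n\<ge>1. \<forall>k\<in>{1..n}. 0 \<le> \<theta> n k \<and> \<theta> n k < 2 * pi"
    and theta_sorted: "\<forall>n\<ge>1. \<forall>k\<in>{1..n}. \<forall>l\<in>{1..n}. k \<le> l \<longrightarrow> \<theta> n k \<le> \<theta> n l"
    and f_onb: "\<forall>n\<ge>1. orthonormal_basis n (f n)"
    and f_eigen: "\<forall>n\<ge>1. \<forall>k\<in>{1..n}.
        mv n (u n) (f n k) = (\<lambda>i. exp (\<i> * complex_of_real (\<theta> n k)) * f n k i)"
    and decomp: "\<forall>n\<ge>1. mv (n+1) (u (n+1)) (evec (n+1)) =
        (\<lambda>i. (\<Sum>k=1..n. \<mu> n k * f n k i) + \<nu> n * evec (n+1) i)"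
    and u1: "u 1 \<noteq> idm"
    and nu_nz: "\<forall>n\<ge>1. \<nu> n \<noteq> 0"
    and mu_nz: "\<forall>n\<ge>1. \<forall>k\<in>{1..n}. \<mu> n k \<noteq> 0"
  shows "\<forall>n\<ge>1.
     (let \<rho> = cmod (\<nu> n); \<psi> = Arg (\<nu> n);
          \<gamma> = (\<lambda>k. (cmod (\<mu> n k))\<^sup>2 / (1 - (cmod (\<nu> n))\<^sup>2));
          \<Phi> = (\<lambda>\<eta>. (1 + \<rho>\<^sup>2) * cos (\<eta> / 2) - 2 * \<rho> * cos (\<eta> / 2 - \<psi>)
                   + (1 - \<rho>\<^sup>2) * sin (\<eta> / 2) * (\<Sum>k=1..n. \<gamma> k * cot ((\<eta> - \<theta> n k) / 2)))
      in 0 < \<rho> \<and> \<rho> < 1 \<and> -pi < \<psi> \<and> \<psi> \<le> pi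
         \<and> (\<Sum>k=1..n. \<gamma> k) = 1
         \<and> (\<forall>\<eta>. 0 \<le> \<eta> \<and> \<eta> \<le> 2 * pi \<and> (\<forall>k\<in>{1..n}. \<eta> \<noteq> \<theta> n k) \<longrightarrow>
                (\<Phi> \<eta> = 0 \<longleftrightarrow> (\<exists>k\<in>{1..n+1}. \<eta> = \<theta> (n+1) k)))
         \<and> 0 < \<theta> (n+1) 1 \<and> \<theta> (n+1) (n+1) < 2 * pi
         \<and> (\<forall>k\<in>{1..n}. \<theta> (n+1) k < \<theta> n k \<and> \<theta> n k < \<theta> (n+1) (k+1)))"
proof -
  interpret virtual_isometry_eigendata u \<theta> f \<mu> \<nu>
    using assms by unfold_locales
  show ?thesis
    unfolding Let_def
    apply (intro allI impI)
    subgoal premises n for n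
    proof -
      interpret unitary_extension_spectrum n "u (Suc n)" "u n" "f n" "\<theta> n" "\<mu> n" "\<nu> n"
          "f (Suc n)" "\<theta> (Suc n)"
        using n theta_pos_strict_mono unitary_extension_spectrum_step by blast
      show ?thesis
        using rho_pos rho_less_1 Arg_bounded[of "\<nu> n"] sum_gamma Phi_zero_iff
          t_pos[of 1] t_less_2pi[of "Suc n"] interlacing
        unfolding Phi_def \<rho>_def \<psi>_def \<gamma>_def by simp
    qed
    done
qed

end
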